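(* Let $m,n\ge1$ and let $u$ be a vertex of the unweighted complete bipartite graph $K_{m,n}$ lying in the part of size $m$. Then $u$ is sedentary if and only if $m\ge3$.
   Context: For a graph with adjacency matrix $A$, the transition matrix is $U(t)=e^{itA}$. A vertex $u$ is sedentary if $\inf_{t>0}|U(t)_{u,u}|\ge C$ for some constant $0<C\le1$. *)

theory Defs
  imports "HOL-Analysis.Analysis" "Jordan_Normal_Form.Matrix"
begin

text \<open>Adjacency matrix of the complete bipartite graph K_{m,n}: vertices 0..<m+n,
  the part of size m is {0..<m}, the part of size n is {m..<m+n}.\<close>
definition K_bip_adj :: "nat \<Rightarrow> nat \<Rightarrow> complex mat" where
  "K_bip_adj m n = mat (m + n) (m + n) (\<lambda>(i, j). if (i < m) \<noteq> (j < m) then 1 else 0)"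

definition transition :: "complex mat \<Rightarrow> real \<Rightarrow> complex mat" where
  "transition A t = mat (dim_row A) (dim_col A)
     (\<lambda>(i, j). \<Sum>k. ((\<i> * complex_of_real t) ^ k / of_nat (fact k)) * (A ^\<^sub>m k) $$ (i, j))"

definition sedentary :: "complex mat \<Rightarrow> nat \<Rightarrow> bool" where
  "sedentary A u \<longleftrightarrow>
     (\<exists>C::real. 0 < C \<and> C \<le> 1 \<and> (INF t\<in>{0<..}. cmod (transition A t $$ (u, u))) \<ge> C)"

end

theory Submission
  imports Defs
begin

(* The adjacency matrix A of K_{m,n} satisfies A^3 = mn A.  Hence at a vertex u of the m-side the
   diagonal entries of the odd powers vanish and (A^(2j+2))_{uu} = n (mn)^j, so that summing the
   exponential series gives U(t)_{uu} = 1 - 1/m + cos(t sqrt(mn))/m.  For m >= 3 this stays above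
   1 - 2/m > 0; for m <= 2 the cosine reaches the value 1 - m, where U(t)_{uu} = 0. *)

lemma sum_lessThan_add_threshold:
  fixes f :: "bool \<Rightarrow> 'a::semiring_1"
  shows "(\<Sum>p<m + n. f (p < m)) = of_nat m * f True + of_nat n * f False"
proof -
  have "(\<Sum>p<m + n. f (p < m)) = (\<Sum>p<m. f (p < m)) + (\<Sum>p\<in>{m..<m + n}. f (p < m))"
    by (metis atLeast0LessThan le_add1 sum.atLeastLessThan_concat zero_le)
  also have "\<dots> = (\<Sum>p<m. f True) + (\<Sum>p\<in>{m..<m + n}. f False)"
    by (intro arg_cong2[where f = "(+)"] sum.cong) auto
  finally show ?thesis by simp
qed

lemma K_bip_adj_carrier: "K_bip_adj m n \<in> carrier_mat (m + n) (m + n)"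
  by (simp add: K_bip_adj_def)

lemma K_bip_adj_dims [simp]:
  "dim_row (K_bip_adj m n) = m + n" "dim_col (K_bip_adj m n) = m + n"
  by (simp_all add: K_bip_adj_def)

lemma K_bip_adj_entry:
  "i < m + n \<Longrightarrow> j < m + n \<Longrightarrow> K_bip_adj m n $$ (i, j) = (if (i < m) \<noteq> (j < m) then 1 else 0)"
  by (simp add: K_bip_adj_def)

lemma mult_K_bip_adj_entry:
  assumes "B \<in> carrier_mat (m + n) (m + n)" "i < m + n" "l < m + n"
    and "\<And>p. p < m + n \<Longrightarrow> B $$ (i, p) = (if p < m then a else b)"
  shows "(B * K_bip_adj m n) $$ (i, l) = (if l < m then of_nat n * b else of_nat m * a)"
proof -
  have "(B * K_bip_adj m n) $$ (i, l) =
      (\<Sum>p<m + n. (if p < m then a else b) * (if (p < m) \<noteq> (l < m) then 1 else 0))"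
    using assms by (simp add: K_bip_adj_def scalar_prod_def atLeast0LessThan)
  also have "\<dots> = (if l < m then of_nat n * b else of_nat m * a)"
    by (subst sum_lessThan_add_threshold) simp
  finally show ?thesis .
qed

lemma K_bip_adj_square_entry:
  assumes "i < m + n" "l < m + n"
  shows "(K_bip_adj m n ^\<^sub>m 2) $$ (i, l) =
    (if (i < m) = (l < m) then (if i < m then of_nat n else of_nat m) else 0)"
proof -
  have "K_bip_adj m n ^\<^sub>m 2 = K_bip_adj m n * K_bip_adj m n"
    using K_bip_adj_carrier[of m n] by (simp add: numeral_2_eq_2)
  then show ?thesis
    using assms mult_K_bip_adj_entry[OF K_bip_adj_carrier assms,
        where a = "if i < m then 0 else 1" and b = "if i < m then 1 else 0"]
    by (auto simp: K_bip_adj_entry)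
qed

lemma K_bip_adj_cube: "K_bip_adj m n ^\<^sub>m 3 = of_nat (m * n) \<cdot>\<^sub>m K_bip_adj m n"
proof (rule eq_matI)
  fix i l
  assume "i < dim_row (of_nat (m * n) \<cdot>\<^sub>m K_bip_adj m n)" "l < dim_col (of_nat (m * n) \<cdot>\<^sub>m K_bip_adj m n)"
  then have il: "i < m + n" "l < m + n" by simp_all
  have "(K_bip_adj m n ^\<^sub>m 2 * K_bip_adj m n) $$ (i, l) =
    (if (i < m) = (l < m) then 0 else of_nat (m * n))"
    using il mult_K_bip_adj_entry[OF pow_carrier_mat[OF K_bip_adj_carrier] il,
        where a = "if i < m then of_nat n else 0" and b = "if i < m then 0 else of_nat m"]
    by (auto simp: K_bip_adj_square_entry)
  moreover have "K_bip_adj m n ^\<^sub>m 3 = K_bip_adj m n ^\<^sub>m 2 * K_bip_adj m n"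
    by (simp add: numeral_3_eq_3 numeral_2_eq_2)
  ultimately show "(K_bip_adj m n ^\<^sub>m 3) $$ (i, l) = (of_nat (m * n) \<cdot>\<^sub>m K_bip_adj m n) $$ (i, l)"
    using il by (auto simp: K_bip_adj_entry)
qed simp_all

lemma K_bip_adj_pow_add3:
  "K_bip_adj m n ^\<^sub>m (k + 3) = of_nat (m * n) \<cdot>\<^sub>m K_bip_adj m n ^\<^sub>m (k + 1)"
proof (induction k)
  case 0
  then show ?case using K_bip_adj_carrier[of m n] by (simp add: K_bip_adj_cube)
next
  case (Suc k)
  have "K_bip_adj m n ^\<^sub>m (Suc k + 3) = K_bip_adj m n ^\<^sub>m (k + 3) * K_bip_adj m n"
    by (simp only: add_Suc pow_mat.simps(2))
  also have "\<dots> = (of_nat (m * n) \<cdot>\<^sub>m K_bip_adj m n ^\<^sub>m (k + 1)) * K_bip_adj m n"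
    by (simp only: Suc.IH)
  also have "\<dots> = of_nat (m * n) \<cdot>\<^sub>m (K_bip_adj m n ^\<^sub>m (k + 1) * K_bip_adj m n)"
    by (rule mult_smult_assoc_mat[OF pow_carrier_mat K_bip_adj_carrier]) (rule K_bip_adj_carrier)
  finally show ?case by (simp only: add_Suc pow_mat.simps(2))
qed

lemma K_bip_adj_pow_diag_odd:
  assumes "u < m"
  shows "(K_bip_adj m n ^\<^sub>m (2 * j + 1)) $$ (u, u) = 0"
proof (induction j)
  case 0
  have "K_bip_adj m n ^\<^sub>m 1 = K_bip_adj m n"
    using K_bip_adj_carrier by simp
  then show ?case using assms by (simp add: K_bip_adj_entry)
next
  case (Suc j)
  have "K_bip_adj m n ^\<^sub>m (2 * Suc j + 1) = of_nat (m * n) \<cdot>\<^sub>m K_bip_adj m n ^\<^sub>m (2 * j + 1)"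
    using K_bip_adj_pow_add3[of m n "2 * j"] by (simp add: numeral_3_eq_3 del: pow_mat.simps)
  then show ?case
    using Suc.IH assms by (simp del: pow_mat.simps)
qed

lemma K_bip_adj_pow_diag_even:
  assumes "u < m"
  shows "(K_bip_adj m n ^\<^sub>m (2 * j + 2)) $$ (u, u) = of_nat n * of_nat (m * n) ^ j"
proof (induction j)
  case 0
  have "2 * 0 + 2 = (2::nat)" by simp
  then show ?case using assms K_bip_adj_square_entry[of u m n u] by (simp only:) simp
next
  case (Suc j)
  have "K_bip_adj m n ^\<^sub>m (2 * Suc j + 2) = of_nat (m * n) \<cdot>\<^sub>m K_bip_adj m n ^\<^sub>m (2 * j + 2)"
    using K_bip_adj_pow_add3[of m n "2 * j + 1"] by (simp add: numeral_3_eq_3 del: pow_mat.simps)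
  then show ?case
    using Suc.IH assms by (simp del: pow_mat.simps)
qed

(* Stated in this shape so that the exponential series for m U(t)_{uu} splits term by term into
   the cosine series of t sqrt(mn) and the constant m - 1. *)
lemma K_bip_adj_pow_diag:
  assumes "u < m"
  shows "of_nat m * (K_bip_adj m n ^\<^sub>m k) $$ (u, u) =
    (if even k then of_nat (m * n) ^ (k div 2) else 0) + (if k = 0 then of_nat m - 1 else 0)"
proof -
  have "k = 0 \<or> (\<exists>j. k = 2 * j + 1) \<or> (\<exists>j. k = 2 * j + 2)" by presburger
  then consider "k = 0" | j where "k = 2 * j + 1" | j where "k = 2 * j + 2" by blast
  then show ?thesis
  proof cases
    case 1
    then show ?thesis using assms by simp
  next
    case (2 j)
    then show ?thesis using assms K_bip_adj_pow_diag_odd by simp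
  next
    case (3 j)
    then have "k div 2 = Suc j" by simp
    then show ?thesis using 3 assms K_bip_adj_pow_diag_even by simp
  qed
qed

lemma exp_i_series_term_eq_cos_coeff:
  assumes "0 \<le> c"
  shows "(\<i> * of_real t) ^ k / of_nat (fact k) * (if even k then of_real c ^ (k div 2) else 0) =
    of_real (cos_coeff k * (t * sqrt c) ^ k)"
proof (cases "even k")
  case True
  then obtain j where k: "k = 2 * j" by blast
  have "(\<i> * of_real t) ^ k = of_real ((-1) ^ j * t ^ k)"
    unfolding k power_mult_distrib power_mult by simp
  moreover have "(t * sqrt c) ^ k = t ^ k * c ^ j"
    unfolding k power_mult_distrib power_mult using assms by simp
  ultimately show ?thesis
    using k by (simp add: cos_coeff_def)
qed (simp add: cos_coeff_def)

lemma transition_K_bip_adj_diag: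
  assumes "u < m"
  shows "transition (K_bip_adj m n) t $$ (u, u) =
    of_real (1 - 1 / real m + cos (t * sqrt (real m * real n)) / real m)"
proof -
  let ?x = "t * sqrt (real m * real n)"
  have m: "real m > 0" using assms by simp
  have series_term: "(\<i> * of_real t) ^ k / of_nat (fact k) * (K_bip_adj m n ^\<^sub>m k) $$ (u, u) =
      of_real (cos_coeff k * ?x ^ k / real m + (if k = 0 then 1 - 1 / real m else 0))" for k
  proof (cases "k = 0")
    case True
    then show ?thesis using assms by (simp add: cos_coeff_def field_simps)
  next
    case False
    have "(K_bip_adj m n ^\<^sub>m k) $$ (u, u) =
        (if even k then of_real (real m * real n) ^ (k div 2) else 0) / of_nat m"
      using K_bip_adj_pow_diag[OF assms, of n k] m False by (simp add: eq_divide_eq mult.commute)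
    then show ?thesis
      using exp_i_series_term_eq_cos_coeff[of "real m * real n" t k] False by simp
  qed
  have "(\<lambda>k. cos_coeff k * ?x ^ k / real m + (if k = 0 then 1 - 1 / real m else 0))
      sums (cos ?x / real m + (1 - 1 / real m))"
    by (intro sums_add sums_divide sums_single) (use cos_converges[of ?x] in simp)
  then have "(\<lambda>k. (\<i> * of_real t) ^ k / of_nat (fact k) * (K_bip_adj m n ^\<^sub>m k) $$ (u, u))
      sums of_real (1 - 1 / real m + cos ?x / real m)"
    unfolding series_term sums_of_real_iff by (simp add: algebra_simps)
  then show ?thesis
    using assms by (simp add: transition_def sums_iff)
qed

lemma norm_transition_K_bip_adj_diag_ge:
  assumes "u < m"
  shows "1 - 2 / real m \<le> cmod (transition (K_bip_adj m n) t $$ (u, u))"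
proof -
  let ?a = "1 - 1 / real m + cos (t * sqrt (real m * real n)) / real m"
  have "- 1 / real m \<le> cos (t * sqrt (real m * real n)) / real m"
    using divide_right_mono[OF cos_ge_minus_one] by simp
  then have "1 - 2 / real m \<le> ?a" by simp
  also have "\<dots> \<le> \<bar>?a\<bar>" by (rule abs_ge_self)
  also have "\<dots> = cmod (transition (K_bip_adj m n) t $$ (u, u))"
    unfolding transition_K_bip_adj_diag[OF assms] by (rule norm_of_real[symmetric])
  finally show ?thesis .
qed

lemma transition_K_bip_adj_diag_vanishes:
  assumes "u < m" "m \<le> 2" "0 < n"
  obtains t where "0 < t" "transition (K_bip_adj m n) t $$ (u, u) = 0"
proof
  let ?\<omega> = "sqrt (real m * real n)"
  have "0 < ?\<omega>" using assms by simp
  moreover have "0 < arccos (1 - real m)"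
    using arccos_less_arccos[of "1 - real m" 1] assms by simp
  ultimately show "0 < arccos (1 - real m) / ?\<omega>" by simp
  have "cos (arccos (1 - real m) / ?\<omega> * ?\<omega>) = 1 - real m"
    using \<open>0 < ?\<omega>\<close> assms by simp
  then show "transition (K_bip_adj m n) (arccos (1 - real m) / ?\<omega>) $$ (u, u) = 0"
    using assms by (simp add: transition_K_bip_adj_diag field_simps)
qed

lemma sedentaryI:
  assumes "0 < c" and "\<And>t. 0 < t \<Longrightarrow> c \<le> cmod (transition A t $$ (u, u))"
  shows "sedentary A u"
  unfolding sedentary_def
proof (intro exI conjI)
  show "min c 1 \<le> (INF t\<in>{0<..}. cmod (transition A t $$ (u, u)))"
    using assms(2) by (intro cINF_greatest) force+
qed (use assms(1) in auto)

lemma not_sedentaryI: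
  assumes "0 < t" and "transition A t $$ (u, u) = 0"
  shows "\<not> sedentary A u"
proof
  assume "sedentary A u"
  then obtain C where "0 < C" "C \<le> (INF t\<in>{0<..}. cmod (transition A t $$ (u, u)))"
    unfolding sedentary_def by blast
  moreover have "(INF t\<in>{0<..}. cmod (transition A t $$ (u, u))) \<le> cmod (transition A t $$ (u, u))"
    using assms(1) by (intro cINF_lower bdd_belowI2[where m = 0]) auto
  ultimately show False
    using assms(2) by simp
qed

theorem proposition39:
  fixes m n u :: nat
  assumes "m \<ge> 1" and "n \<ge> 1" and "u < m"
  shows "sedentary (K_bip_adj m n) u \<longleftrightarrow> m \<ge> 3"
proof
  assume "sedentary (K_bip_adj m n) u"
  show "m \<ge> 3"
  proof (rule ccontr)
    assume "\<not> m \<ge> 3"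
    then have "m \<le> 2" by simp
    then obtain t where "0 < t" "transition (K_bip_adj m n) t $$ (u, u) = 0"
      using transition_K_bip_adj_diag_vanishes[OF assms(3), where n = n] assms(2) by auto
    then show False
      using not_sedentaryI \<open>sedentary (K_bip_adj m n) u\<close> by blast
  qed
next
  assume "m \<ge> 3"
  then show "sedentary (K_bip_adj m n) u"
    by (intro sedentaryI[where c = "1 - 2 / real m"] norm_transition_K_bip_adj_diag_ge assms(3))
      (simp add: field_simps)
qed

end
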